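(* Let $m,n\in\mathbb{N}_0$ with $m>n$, and let \[ \mathcal{F}_{m,n}=\{p(x)+\ln(x)q(x):\ p\in\Pi_m,\ q\in\Pi_n\}, \] considered as functions on $(1,\infty)$. Then every nonzero $f\in\mathcal{F}_{m,n}$ has at most $m+n+1$ distinct zeros in $(1,\infty)$.
   Context: $\Pi_n$ denotes the space of real polynomials of degree at most $n$. *)

theory Defs
  imports "HOL-Analysis.Analysis" "HOL-Computational_Algebra.Polynomial"
begin

definition plog_fun :: "real poly \<Rightarrow> real poly \<Rightarrow> real \<Rightarrow> real" where
  "plog_fun p q x = poly p x + ln x * poly q x"

end

theory Submission
  imports Defs
begin

text \<open>
  Write \<open>\<theta> = x d/dx\<close>. Then \<open>\<theta>(p + ln x \<cdot> q) = (\<theta>p + q) + ln x \<cdot> \<theta>q\<close>, so \<open>\<theta>\<close> maps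
  \<open>\<F>\<^sub>m\<^sub>,\<^sub>n\<close> into itself (as \<open>n \<le> m\<close>), while the further derivative of the image
  is \<open>(\<theta>p + q)' + q' + ln x \<cdot> (\<theta>q)'\<close>, which lies in \<open>\<F>\<^sub>m\<^sub>-\<^sub>1\<^sub>,\<^sub>n\<^sub>-\<^sub>1\<close>.
  By Rolle's theorem each differentiation loses at most one zero, so two steps reduce
  \<open>(m, n)\<close> to \<open>(m - 1, n - 1)\<close>; after \<open>n\<close> such rounds one more step reaches a
  polynomial of degree at most \<open>m - n\<close>. Hence at most \<open>2n + (m - n) + 1 = m + n + 1\<close> zeros.
\<close>

definition zeros_bounded_on :: "'a set \<Rightarrow> ('a \<Rightarrow> 'b::zero) \<Rightarrow> nat \<Rightarrow> bool" where
  "zeros_bounded_on S f K \<longleftrightarrow>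
     (\<exists>x\<in>S. f x \<noteq> 0) \<longrightarrow> finite {x\<in>S. f x = 0} \<and> card {x\<in>S. f x = 0} \<le> K"

lemma zeros_bounded_on_mono:
  "zeros_bounded_on S f K \<Longrightarrow> K \<le> L \<Longrightarrow> zeros_bounded_on S f L"
  unfolding zeros_bounded_on_def by auto

lemma zeros_bounded_on_cong:
  assumes "\<And>x. x \<in> S \<Longrightarrow> f x = 0 \<longleftrightarrow> g x = 0"
  shows "zeros_bounded_on S f K \<longleftrightarrow> zeros_bounded_on S g K"
proof -
  have "{x\<in>S. f x = 0} = {x\<in>S. g x = 0}" using assms by blast
  then show ?thesis unfolding zeros_bounded_on_def by auto
qed

lemma zeros_bounded_on_poly:
  fixes p :: "'a::{comm_ring_1,ring_no_zero_divisors} poly"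
  shows "zeros_bounded_on S (poly p) (degree p)"
  unfolding zeros_bounded_on_def
proof
  assume "\<exists>x\<in>S. poly p x \<noteq> 0"
  then have "p \<noteq> 0" by auto
  have sub: "{x\<in>S. poly p x = 0} \<subseteq> {x. poly p x = 0}" by blast
  show "finite {x\<in>S. poly p x = 0} \<and> card {x\<in>S. poly p x = 0} \<le> degree p"
    using finite_subset[OF sub poly_roots_finite[OF \<open>p \<noteq> 0\<close>]]
      card_mono[OF poly_roots_finite[OF \<open>p \<noteq> 0\<close>] sub] card_poly_roots_bound[OF \<open>p \<noteq> 0\<close>]
    by linarith
qed

lemma MVT_interval:
  fixes f f' :: "real \<Rightarrow> real"
  assumes S: "is_interval S" and deriv: "\<And>x. x \<in> S \<Longrightarrow> (f has_real_derivative f' x) (at x)"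
    and "a \<in> S" "b \<in> S" "a < b"
  obtains z where "a < z" "z < b" "z \<in> S" "f b - f a = (b - a) * f' z"
proof -
  have between: "x \<in> S" if "a \<le> x" "x \<le> b" for x
    using S \<open>a \<in> S\<close> \<open>b \<in> S\<close> that unfolding is_interval_1 by blast
  obtain z where "a < z" "z < b" "f b - f a = (b - a) * f' z"
    using MVT2[OF \<open>a < b\<close> deriv[OF between]] by blast
  with between show thesis using that by simp
qed

text \<open>Between consecutive zeros of \<open>f\<close> lies a zero of \<open>f'\<close>; counting only those below
  \<open>Max A\<close> is what makes the induction over \<open>A\<close> go through.\<close>

lemma card_zeros_le_card_deriv_zeros_below:
  fixes f f' :: "real \<Rightarrow> real"
  assumes S: "is_interval S" and deriv: "\<And>x. x \<in> S \<Longrightarrow> (f has_real_derivative f' x) (at x)"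
    and fin: "finite {x\<in>S. f' x = 0}"
    and "finite A" "A \<noteq> {}" "A \<subseteq> {x\<in>S. f x = 0}"
  shows "card A \<le> card {x\<in>S. f' x = 0 \<and> x < Max A} + 1"
  using \<open>finite A\<close> \<open>A \<noteq> {}\<close> \<open>A \<subseteq> {x\<in>S. f x = 0}\<close>
proof (induction A rule: finite_linorder_max_induct)
  case empty
  then show ?case by simp
next
  case (insert b A)
  define Z where "Z c = {x\<in>S. f' x = 0 \<and> x < c}" for c
  have fin_Z: "finite (Z c)" for c
    by (rule finite_subset[OF _ fin]) (auto simp: Z_def)
  have card_insert: "card (insert b A) = card A + 1"
    using insert.hyps by auto
  have Max_insert: "Max (insert b A) = b"
    using insert.hyps by (intro Max_eqI) auto
  show ?case
  proof (cases "A = {}")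
    case False
    define a where "a = Max A"
    have "a \<in> A" "a < b"
      using False insert.hyps unfolding a_def by auto
    then have "a \<in> S" "b \<in> S" "f a = 0" "f b = 0"
      using insert.prems by auto
    then obtain z where z: "a < z" "z < b" "z \<in> S" "f b - f a = (b - a) * f' z"
      using MVT_interval[OF S deriv] \<open>a < b\<close> by blast
    have "f' z = 0"
      using z(4) \<open>a < b\<close> \<open>f a = 0\<close> \<open>f b = 0\<close> by simp
    then have "insert z (Z a) \<subseteq> Z b" "z \<notin> Z a"
      using z \<open>a < b\<close> by (auto simp: Z_def)
    then have "card (Z a) + 1 \<le> card (Z b)"
      using card_mono[OF fin_Z] fin_Z by (metis Suc_eq_plus1 card_insert_disjoint)
    moreover have "card A \<le> card (Z a) + 1"
      using insert.IH False insert.prems unfolding a_def Z_def by blast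
    ultimately show ?thesis
      unfolding card_insert Max_insert Z_def[symmetric] by linarith
  qed (simp add: card_insert)
qed

lemma zeros_bounded_on_deriv:
  fixes f f' :: "real \<Rightarrow> real"
  assumes S: "is_interval S" and deriv: "\<And>x. x \<in> S \<Longrightarrow> (f has_real_derivative f' x) (at x)"
    and f': "zeros_bounded_on S f' K"
  shows "zeros_bounded_on S f (Suc K)"
  unfolding zeros_bounded_on_def
proof
  assume "\<exists>x\<in>S. f x \<noteq> 0"
  then obtain c where "c \<in> S" "f c \<noteq> 0" by blast
  show "finite {x\<in>S. f x = 0} \<and> card {x\<in>S. f x = 0} \<le> Suc K"
  proof (cases "\<exists>x\<in>S. f' x \<noteq> 0")
    case False
    have "f x = f c" if "x \<in> S" for x
    proof (cases x c rule: linorder_cases)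
      case less
      then show ?thesis using MVT_interval[OF S deriv \<open>x \<in> S\<close> \<open>c \<in> S\<close>] False by force
    next
      case greater
      then show ?thesis using MVT_interval[OF S deriv \<open>c \<in> S\<close> \<open>x \<in> S\<close>] False by force
    qed simp
    then have "{x\<in>S. f x = 0} = {}" using \<open>f c \<noteq> 0\<close> by auto
    then show ?thesis by (metis card.empty finite.emptyI le0)
  next
    case True
    then have fin: "finite {x\<in>S. f' x = 0}" and card: "card {x\<in>S. f' x = 0} \<le> K"
      using f' unfolding zeros_bounded_on_def by auto
    have bound: "card A \<le> Suc K" if "finite A" "A \<subseteq> {x\<in>S. f x = 0}" for A
    proof (cases "A = {}")
      case False
      have "card {x\<in>S. f' x = 0 \<and> x < Max A} \<le> card {x\<in>S. f' x = 0}"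
        by (rule card_mono[OF fin]) blast
      then show ?thesis
        using card_zeros_le_card_deriv_zeros_below[OF S deriv fin that(1) False that(2)] card
        by linarith
    qed simp
    have "finite {x\<in>S. f x = 0}"
    proof (rule ccontr)
      assume "infinite {x\<in>S. f x = 0}"
      then obtain A where "finite A" "card A = Suc (Suc K)" "A \<subseteq> {x\<in>S. f x = 0}"
        using infinite_arbitrarily_large by blast
      then show False using bound by fastforce
    qed
    then show ?thesis using bound by blast
  qed
qed

definition euler_op :: "'a::{comm_semiring_1,semiring_no_zero_divisors} poly \<Rightarrow> 'a poly" where
  "euler_op p = pCons 0 (pderiv p)"

lemma poly_euler_op: "poly (euler_op p) x = x * poly (pderiv p) x"
  by (simp add: euler_op_def)

lemma euler_op_add: "euler_op (p + q) = euler_op p + euler_op q"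
  by (simp add: euler_op_def pderiv_add)

lemma degree_euler_op_le:
  fixes p :: "'a::{comm_semiring_1,semiring_no_zero_divisors,semiring_char_0} poly"
  shows "degree (euler_op p) \<le> degree p"
proof (cases "pderiv p = 0")
  case False
  then have "degree p \<noteq> 0" using pderiv_eq_0_iff by auto
  then show ?thesis using False by (simp add: euler_op_def degree_pderiv)
qed (simp add: euler_op_def)

lemma plog_fun_euler_op:
  "plog_fun (euler_op p) (euler_op q) x = x * plog_fun (pderiv p) (pderiv q) x"
  by (simp add: plog_fun_def poly_euler_op algebra_simps)

lemma has_real_derivative_plog_fun:
  assumes "x > 0"
  shows "(plog_fun p q has_real_derivative plog_fun (euler_op p + q) (euler_op q) x / x) (at x)"
proof -
  have "(plog_fun p q has_real_derivative
      poly (pderiv p) x + (inverse x * poly q x + ln x * poly (pderiv q) x)) (at x)"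
    unfolding plog_fun_def[abs_def] using assms
    by (auto intro!: derivative_eq_intros simp: field_simps)
  moreover have "poly (pderiv p) x + (inverse x * poly q x + ln x * poly (pderiv q) x)
      = plog_fun (euler_op p + q) (euler_op q) x / x"
    using assms by (simp add: plog_fun_def poly_euler_op field_simps)
  ultimately show ?thesis by simp
qed

lemma zeros_bounded_on_plog_fun_euler_op:
  assumes "is_interval S" "S \<subseteq> {0<..}"
    and "zeros_bounded_on S (plog_fun (euler_op p + q) (euler_op q)) K"
  shows "zeros_bounded_on S (plog_fun p q) (Suc K)"
proof (rule zeros_bounded_on_deriv[OF \<open>is_interval S\<close>])
  show "(plog_fun p q has_real_derivative plog_fun (euler_op p + q) (euler_op q) x / x) (at x)"
    if "x \<in> S" for x
    using has_real_derivative_plog_fun that assms(2) by auto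
  show "zeros_bounded_on S (\<lambda>x. plog_fun (euler_op p + q) (euler_op q) x / x) K"
    using assms(3) by (rule iffD1[OF zeros_bounded_on_cong, rotated]) (use assms(2) in auto)
qed

lemma zeros_bounded_on_plog_fun:
  assumes S: "is_interval S" "S \<subseteq> {0<..}"
  shows "n \<le> m \<Longrightarrow> degree p \<le> m \<Longrightarrow> degree q \<le> n
    \<Longrightarrow> zeros_bounded_on S (plog_fun p q) (m + n + 1)"
proof (induction n arbitrary: m p q)
  case 0
  then have "pderiv q = 0"
    by (simp add: pderiv_eq_0_iff)
  then have "plog_fun (euler_op p + q) (euler_op q) = poly (euler_op p + q)"
    by (simp add: euler_op_def plog_fun_def fun_eq_iff)
  moreover have "degree (euler_op p + q) \<le> m"
    by (intro degree_add_le order.trans[OF degree_euler_op_le]) (use 0 in auto)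
  then have "zeros_bounded_on S (poly (euler_op p + q)) m"
    by (rule zeros_bounded_on_mono[OF zeros_bounded_on_poly])
  ultimately show ?case
    using zeros_bounded_on_plog_fun_euler_op[OF S] by simp
next
  case (Suc k)
  then obtain m' where m: "m = Suc m'" "k \<le> m'" by (cases m) auto
  define P where "P = euler_op p + q"
  define Q where "Q = euler_op q"
  have "degree (P + q) \<le> m"
    unfolding P_def by (intro degree_add_le order.trans[OF degree_euler_op_le]) (use Suc.prems in auto)
  then have "degree (pderiv (P + q)) \<le> m'"
    using m by (simp add: degree_pderiv)
  moreover have "degree (pderiv Q) \<le> k"
    unfolding Q_def using Suc.prems(3) degree_euler_op_le[of q] by (simp add: degree_pderiv)
  ultimately have "zeros_bounded_on S (plog_fun (pderiv (P + q)) (pderiv Q)) (m' + k + 1)"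
    by (rule Suc.IH[OF m(2)])
  moreover have "plog_fun (euler_op P + Q) (euler_op Q) x
      = x * plog_fun (pderiv (P + q)) (pderiv Q) x" for x
    by (simp only: Q_def euler_op_add[symmetric] plog_fun_euler_op)
  ultimately have "zeros_bounded_on S (plog_fun (euler_op P + Q) (euler_op Q)) (m' + k + 1)"
    by (subst zeros_bounded_on_cong) (use S(2) in auto)
  then have "zeros_bounded_on S (plog_fun P Q) (Suc (m' + k + 1))"
    by (rule zeros_bounded_on_plog_fun_euler_op[OF S])
  then have "zeros_bounded_on S (plog_fun p q) (Suc (Suc (m' + k + 1)))"
    unfolding P_def Q_def by (rule zeros_bounded_on_plog_fun_euler_op[OF S])
  then show ?case using m by simp
qed

theorem mainTheorem10:
  fixes m n :: nat and p q :: "real poly"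
  assumes "m > n"
    and "degree p \<le> m" and "degree q \<le> n"
    and "\<exists>x>1. plog_fun p q x \<noteq> 0"
  shows "finite {x. x > 1 \<and> plog_fun p q x = 0}
         \<and> card {x. x > 1 \<and> plog_fun p q x = 0} \<le> m + n + 1"
proof -
  have "is_interval {1::real<..}" "{1::real<..} \<subseteq> {0<..}"
    by (auto simp: is_interval_1)
  then have "zeros_bounded_on {1<..} (plog_fun p q) (m + n + 1)"
    using zeros_bounded_on_plog_fun assms(1-3) by simp
  then show ?thesis
    using assms(4) unfolding zeros_bounded_on_def greaterThan_iff by blast
qed

end
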